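(* Let $n\ge 1$ and consider the quadratic system $\mathbf{E}\dot{\mathbf{x}} = \mathbf{A}\mathbf{x} + \mathbf{H}(\mathbf{x}\otimes\mathbf{x})$ with $\mathbf{x}(t)\in\mathbb{R}^n$, where $\mathbf{E}\in\mathbb{R}^{n\times n}$ is nonsingular, $\mathbf{A}\in\mathbb{R}^{n\times n}$, and $\mathbf{H}\in\mathbb{R}^{n\times n^2}$ satisfies $\mathbf{H}(\mathbf{x}_1\otimes\mathbf{x}_2)=\mathbf{H}(\mathbf{x}_2\otimes\mathbf{x}_1)$ for all $\mathbf{x}_1,\mathbf{x}_2\in\mathbb{R}^n$. Let $\mathbf{A}$ be Hurwitz and let $\mathbf{P}\in\mathbb{R}^{n\times n}$ be a Lyapunov matrix, i.e., a symmetric positive definite matrix satisfying $\mathbf{A}^\top\mathbf{P}\mathbf{E}+\mathbf{E}^\top\mathbf{P}\mathbf{A}+\mathbf{Q}=\mathbf{0}$ for some positive definite $\mathbf{Q}=\mathbf{Q}_f^\top\mathbf{Q}_f$. Let $v(\mathbf{x})=\mathbf{x}^\top\mathbf{E}^\top\mathbf{P}\mathbf{E}\mathbf{x}$. Then $\mathbf{x}_e=\mathbf{0}$ is a locally stable equilibrium, and $\mathcal{D}(\rho)\subseteq\mathcal{A}(\mathbf{0})$ with $$\rho=\frac{\sigma_{\min}^2(\mathbf{Q}_f)}{2\,\|\mathbf{H}\|_2\sqrt{\|\mathbf{P}\|_2}},$$ i.e., $\mathcal{D}(\rho)$ is an estimate of the domain of attraction of $\mathbf{0}$.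
   Context: $\otimes$ denotes the Kronecker product and $\|\cdot\|_2$ the Euclidean vector norm / spectral (induced 2-) matrix norm. $\sigma_{\min}(\mathbf{Q}_f)$ denotes the smallest nonzero singular value of $\mathbf{Q}_f$. $\dot v(\mathbf{x})$ denotes the derivative of $v$ along trajectories of the system, $\dot v(\mathbf{x}) = \dot{\mathbf{x}}^\top\mathbf{E}^\top\mathbf{P}\mathbf{E}\mathbf{x}+\mathbf{x}^\top\mathbf{E}^\top\mathbf{P}\mathbf{E}\dot{\mathbf{x}}$ with $\dot{\mathbf{x}}=\mathbf{E}^{-1}(\mathbf{A}\mathbf{x}+\mathbf{H}(\mathbf{x}\otimes\mathbf{x}))$. For $\rho>0$, $\mathcal{D}(\rho)=\{\mathbf{x}\in\mathbb{R}^n : v(\mathbf{x})\le\rho^2,\ \dot v(\mathbf{x})<0\}$. Writing $\phi(\mathbf{x}_0,t)$ for the solution with initial condition $\mathbf{x}_0$, the domain of attraction of the equilibrium $\mathbf{0}$ is $\mathcal{A}(\mathbf{0})=\{\mathbf{x}_0 : \lim_{t\to\infty}\phi(\mathbf{x}_0,t)=\mathbf{0}\}$. *)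

theory Defs
  imports "HOL-Analysis.Analysis"
begin

text \<open>Kronecker product of two vectors in R^n, indexed by pairs (i,j)
  (corresponding to the flat index (i-1)n + j of R^(n^2)).\<close>
definition kron :: "real^'n \<Rightarrow> real^'n \<Rightarrow> real^('n \<times> 'n)" where
  "kron x y = (\<chi> p. x $ fst p * y $ snd p)"

definition spec_norm :: "real^'k^'m \<Rightarrow> real" where
  "spec_norm M = onorm (\<lambda>x. M *v x)"

definition symmetric_mat :: "real^'n^'n \<Rightarrow> bool" where
  "symmetric_mat M \<longleftrightarrow> transpose M = M"

definition pos_def :: "real^'n^'n \<Rightarrow> bool" where
  "pos_def M \<longleftrightarrow> symmetric_mat M \<and> (\<forall>x. x \<noteq> 0 \<longrightarrow> x \<bullet> (M *v x) > 0)"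

definition real_eigenvalue :: "real^'n^'n \<Rightarrow> real \<Rightarrow> bool" where
  "real_eigenvalue M l \<longleftrightarrow> (\<exists>v. v \<noteq> 0 \<and> M *v v = l *s v)"

definition hurwitz :: "real^'n^'n \<Rightarrow> bool" where
  "hurwitz A \<longleftrightarrow> (\<forall>(l::complex) (v::complex^'n). v \<noteq> 0 \<and>
      (\<chi> i j. complex_of_real (A $ i $ j)) *v v = l *s v \<longrightarrow> Re l < 0)"

text \<open>Singular values of Qf are the square roots of the eigenvalues of Qf^T Qf;
  sigma_min is the smallest nonzero one.\<close>
definition sigma_min :: "real^'n^'m \<Rightarrow> real" where
  "sigma_min Qf = Min {sqrt l | l. real_eigenvalue (transpose Qf ** Qf) l \<and> l \<noteq> 0}"

definition qrhs :: "real^'n^'n \<Rightarrow> real^'n^'n \<Rightarrow> real^('n\<times>'n)^'n \<Rightarrow> real^'n \<Rightarrow> real^'n" where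
  "qrhs E A H x = matrix_inv E *v (A *v x + H *v kron x x)"

definition is_solution :: "(real^'n \<Rightarrow> real^'n) \<Rightarrow> real^'n \<Rightarrow> (real \<Rightarrow> real^'n) \<Rightarrow> bool" where
  "is_solution f x0 \<phi> \<longleftrightarrow> \<phi> 0 = x0 \<and>
     (\<forall>t\<ge>0. (\<phi> has_vector_derivative f (\<phi> t)) (at t within {0..}))"

definition domain_of_attraction :: "(real^'n \<Rightarrow> real^'n) \<Rightarrow> (real^'n) set" where
  "domain_of_attraction f = {x0. (\<exists>\<phi>. is_solution f x0 \<phi>) \<and>
      (\<forall>\<phi>. is_solution f x0 \<phi> \<longrightarrow> (\<phi> \<longlongrightarrow> 0) at_top)}"

definition stable_equilibrium_0 :: "(real^'n \<Rightarrow> real^'n) \<Rightarrow> bool" where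
  "stable_equilibrium_0 f \<longleftrightarrow> f 0 = 0 \<and>
     (\<forall>\<epsilon>>0. \<exists>\<delta>>0. \<forall>x0. norm x0 < \<delta> \<longrightarrow>
        (\<exists>\<phi>. is_solution f x0 \<phi>) \<and>
        (\<forall>\<phi>. is_solution f x0 \<phi> \<longrightarrow> (\<forall>t\<ge>0. norm (\<phi> t) < \<epsilon>)))"

definition lyap_v :: "real^'n^'n \<Rightarrow> real^'n^'n \<Rightarrow> real^'n \<Rightarrow> real" where
  "lyap_v E P x = x \<bullet> ((transpose E ** P ** E) *v x)"

definition lyap_vdot :: "real^'n^'n \<Rightarrow> real^'n^'n \<Rightarrow> real^('n\<times>'n)^'n \<Rightarrow> real^'n^'n \<Rightarrow> real^'n \<Rightarrow> real" where
  "lyap_vdot E A H P x = (let xd = qrhs E A H x in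
      xd \<bullet> ((transpose E ** P ** E) *v x) + x \<bullet> ((transpose E ** P ** E) *v xd))"

definition D_set :: "real^'n^'n \<Rightarrow> real^'n^'n \<Rightarrow> real^('n\<times>'n)^'n \<Rightarrow> real^'n^'n \<Rightarrow> real \<Rightarrow> (real^'n) set" where
  "D_set E A H P \<rho> = {x. lyap_v E P x \<le> \<rho>\<^sup>2 \<and> lyap_vdot E A H P x < 0}"

end

theory Submission
  imports Defs
begin

(* Along trajectories, the Lyapunov equation cancels the linear part of the field, and
   Cauchy-Schwarz in the P-inner product bounds the quadratic part, so that
     v'(x) <= |x|^2 (alpha sqrt (v x) - sigma_min^2),   alpha = 2 |H| sqrt |P|.
   Hence v cannot increase on a sublevel set {v <= c} with alpha sqrt c < sigma_min^2, which
   is therefore forward invariant, and on it v' <= -gamma v, so that v and x decay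
   exponentially. Small sublevel sets give stability. A point of D(rho) lies in the closed
   sublevel set of the critical level rho^2 and enters the open one at once because v' < 0 there.
   Solutions exist because the field agrees on the invariant sublevel set with a globally
   Lipschitz field, for which Picard iteration converges. *)

lemma matrix_mult_matrix_inv:
  fixes E :: "'a::field^'n^'n"
  shows "invertible E \<Longrightarrow> E ** matrix_inv E = mat 1"
  unfolding invertible_def matrix_inv_def by (rule someI_ex[THEN conjunct1])

lemma matrix_vector_mult_qrhs:
  "invertible E \<Longrightarrow> E *v qrhs E A H x = A *v x + H *v kron x x"
  unfolding qrhs_def by (simp add: matrix_vector_mul_assoc matrix_mult_matrix_inv)

lemma invertible_matrix_vector_eq_0:
  fixes E :: "real^'n^'n"
  shows "invertible E \<Longrightarrow> E *v x = 0 \<longleftrightarrow> x = 0"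
  by (metis matrix_left_invertible_ker invertible_left_inverse matrix_vector_mult_0_right)

lemma kron_0 [simp]: "kron 0 0 = 0"
  by (simp add: kron_def vec_eq_iff)

lemma qrhs_0 [simp]: "qrhs E A H 0 = 0"
  by (simp add: qrhs_def)

lemma norm_kron: "norm (kron x y) = norm x * norm y"
proof -
  have "kron x y \<bullet> kron x y = (\<Sum>(i, j)\<in>UNIV \<times> UNIV. (x$i * x$i) * (y$j * y$j))"
    unfolding inner_vec_def kron_def UNIV_Times_UNIV by (simp add: case_prod_beta ac_simps)
  also have "\<dots> = (x \<bullet> x) * (y \<bullet> y)"
    unfolding inner_vec_def by (simp add: sum_product sum.cartesian_product)
  finally show ?thesis by (simp add: norm_eq_sqrt_inner real_sqrt_mult)
qed

lemma kron_diff_kron: "kron x x - kron y y = kron (x - y) x + kron y (x - y)"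
  by (simp add: kron_def vec_eq_iff algebra_simps)

lemma norm_matrix_vector_le: "norm (M *v x) \<le> spec_norm M * norm x"
  unfolding spec_norm_def by (rule onorm[OF matrix_vector_mul_bounded_linear])

lemma spec_norm_nonneg [simp]: "spec_norm M \<ge> 0"
  unfolding spec_norm_def by (rule onorm_pos_le[OF matrix_vector_mul_bounded_linear])

lemma inner_matrix_vector_transpose:
  fixes M :: "real^'n^'m"
  shows "x \<bullet> (M *v y) = (transpose M *v x) \<bullet> y"
  by (simp add: dot_lmul_matrix)

lemma inner_transpose_mult_mult:
  fixes B :: "real^'n^'k" and P :: "real^'k^'k" and C :: "real^'m^'k"
  shows "u \<bullet> ((transpose B ** P ** C) *v w) = (B *v u) \<bullet> (P *v (C *v w))"
  by (simp only: matrix_vector_mul_assoc[symmetric])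
    (subst inner_matrix_vector_transpose, simp only: transpose_transpose)

lemma symmetric_mat_inner:
  fixes M :: "real^'n^'n"
  shows "symmetric_mat M \<Longrightarrow> x \<bullet> (M *v y) = (M *v x) \<bullet> y"
  by (simp add: inner_matrix_vector_transpose symmetric_mat_def)

lemma quadratic_form_le_spec_norm: "x \<bullet> (M *v x) \<le> spec_norm M * (norm x)\<^sup>2"
proof -
  have "x \<bullet> (M *v x) \<le> norm x * norm (M *v x)"
    by (rule order_trans[OF abs_ge_self Cauchy_Schwarz_ineq2])
  also have "\<dots> \<le> norm x * (spec_norm M * norm x)"
    by (simp add: mult_left_mono norm_matrix_vector_le)
  finally show ?thesis by (simp add: power2_eq_square ac_simps)
qed

section \<open>Positive definite matrices\<close>

lemma pos_def_quadratic_form_nonneg: "pos_def M \<Longrightarrow> x \<bullet> (M *v x) \<ge> 0"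
  unfolding pos_def_def by (cases "x = 0") (auto intro: less_imp_le)

lemma quadratic_form_add_scaleR:
  fixes M :: "real^'n^'n"
  assumes "symmetric_mat M"
  shows "(x + s *\<^sub>R y) \<bullet> (M *v (x + s *\<^sub>R y))
           = x \<bullet> (M *v x) + 2 * s * (x \<bullet> (M *v y)) + s\<^sup>2 * (y \<bullet> (M *v y))"
  using symmetric_mat_inner[OF assms, of y x]
  by (simp add: matrix_vector_mult_scaleR matrix_vector_right_distrib inner_add_left
      inner_add_right inner_commute power2_eq_square algebra_simps)

lemma pos_def_Cauchy_Schwarz:
  fixes P :: "real^'n^'n"
  assumes "pos_def P"
  shows "(x \<bullet> (P *v y))\<^sup>2 \<le> (x \<bullet> (P *v x)) * (y \<bullet> (P *v y))"
proof (cases "y = 0")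
  case False
  have sym: "symmetric_mat P" using assms unfolding pos_def_def by simp
  define a b c where "a = x \<bullet> (P *v x)" and "b = x \<bullet> (P *v y)" and "c = y \<bullet> (P *v y)"
  have c: "c > 0" using assms False unfolding pos_def_def c_def by simp
  have "0 \<le> (x + (- b / c) *\<^sub>R y) \<bullet> (P *v (x + (- b / c) *\<^sub>R y))"
    using assms by (rule pos_def_quadratic_form_nonneg)
  also have "\<dots> = a + 2 * (- b / c) * b + (- b / c)\<^sup>2 * c"
    unfolding quadratic_form_add_scaleR[OF sym] a_def b_def c_def ..
  also have "\<dots> = a - b\<^sup>2 / c"
    using c by (simp add: field_simps power2_eq_square)
  finally show ?thesis using c unfolding a_def b_def c_def by (simp add: field_simps)
qed simp

lemma linear_coeff_eq_0_if_nonneg: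
  fixes a b :: real
  assumes "\<And>s. a * s + b * s\<^sup>2 \<ge> 0"
  shows "a = 0"
proof (rule ccontr)
  assume "a \<noteq> 0"
  define c where "c = \<bar>b\<bar> + 1"
  have c: "c > 0" "b < c" unfolding c_def by auto
  have "a * (- a / c) + b * (- a / c)\<^sup>2 = (b - c) * a\<^sup>2 / c\<^sup>2"
    using c by (simp add: field_simps power2_eq_square)
  also have "\<dots> < 0"
    using c \<open>a \<noteq> 0\<close> by (intro divide_neg_pos mult_neg_pos) auto
  finally show False using assms[of "- a / c"] by simp
qed

text \<open>The minimiser u of the quadratic form on the unit sphere is an eigenvector: the first variation
  along w = M u - m u, which is proportional to the squared length of w, must vanish.\<close>
lemma symmetric_mat_min_eigenvector:
  fixes M :: "real^'n^'n"
  assumes sym: "symmetric_mat M"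
  obtains u where "norm u = 1" "M *v u = (u \<bullet> (M *v u)) *s u"
    "\<And>x. (u \<bullet> (M *v u)) * (norm x)\<^sup>2 \<le> x \<bullet> (M *v x)"
proof -
  have "continuous_on (sphere 0 1) (\<lambda>x::real^'n. x \<bullet> (M *v x))"
    by (intro continuous_intros linear_continuous_on matrix_vector_mul_bounded_linear)
  moreover have "sphere (0::real^'n) 1 \<noteq> {}"
    by (metis dist_0_norm empty_iff mem_sphere norm_axis_1)
  ultimately obtain u where u: "u \<in> sphere 0 1"
    and umin: "\<And>y. y \<in> sphere 0 1 \<Longrightarrow> u \<bullet> (M *v u) \<le> y \<bullet> (M *v y)"
    using continuous_attains_inf[OF compact_sphere, of 0 1 "\<lambda>x. x \<bullet> (M *v x)"] by blast
  define m where "m = u \<bullet> (M *v u)"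
  have uu: "u \<bullet> u = 1" using u by (simp add: dot_square_norm)
  have min: "m * (norm x)\<^sup>2 \<le> x \<bullet> (M *v x)" for x
  proof (cases "x = 0")
    case False
    have "m \<le> ((1 / norm x) *\<^sub>R x) \<bullet> (M *v ((1 / norm x) *\<^sub>R x))"
      using False unfolding m_def by (intro umin) simp
    also have "\<dots> = (x \<bullet> (M *v x)) / (norm x)\<^sup>2"
      by (simp add: matrix_vector_mult_scaleR power2_eq_square)
    finally show ?thesis using False by (simp add: field_simps)
  qed simp
  define w where "w = M *v u - m *\<^sub>R u"
  have "2 * (w \<bullet> w) * s + (w \<bullet> (M *v w) - m * (w \<bullet> w)) * s\<^sup>2 \<ge> 0" for s
  proof -
    have "m * (norm (u + s *\<^sub>R w))\<^sup>2 \<le> (u + s *\<^sub>R w) \<bullet> (M *v (u + s *\<^sub>R w))"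
      by (rule min)
    moreover have "(norm (u + s *\<^sub>R w))\<^sup>2 = 1 + 2 * s * (u \<bullet> w) + s\<^sup>2 * (w \<bullet> w)"
      by (simp only: power2_norm_eq_inner)
        (simp add: uu inner_add_left inner_add_right inner_commute power2_eq_square algebra_simps)
    moreover have "w \<bullet> (M *v u) = w \<bullet> w + m * (u \<bullet> w)"
      unfolding w_def by (simp add: inner_diff_left inner_diff_right inner_commute algebra_simps)
    moreover note quadratic_form_add_scaleR[OF sym, of u s w]
    ultimately show ?thesis
      using symmetric_mat_inner[OF sym, of u w] unfolding m_def[symmetric]
      by (simp add: inner_commute algebra_simps power2_eq_square)
  qed
  from linear_coeff_eq_0_if_nonneg[OF this] have "w = 0" by simp
  then have "M *v u = m *s u" unfolding w_def by (simp add: scalar_mult_eq_scaleR)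
  then show thesis using that u min unfolding m_def by simp
qed

lemma finite_real_eigenvalues_symmetric:
  fixes M :: "real^'n^'n"
  assumes sym: "symmetric_mat M"
  shows "finite {l. real_eigenvalue M l}"
proof -
  define S where "S = {l. real_eigenvalue M l}"
  define f where "f l = (SOME v. v \<noteq> 0 \<and> M *v v = l *s v)" for l
  have f: "f l \<noteq> 0 \<and> M *v f l = l *\<^sub>R f l" if "l \<in> S" for l
    using someI_ex[of "\<lambda>v. v \<noteq> 0 \<and> M *v v = l *s v"] that
    unfolding S_def real_eigenvalue_def f_def by (auto simp: scalar_mult_eq_scaleR)
  have inj: "inj_on f S"
    by (rule inj_onI) (metis f scaleR_cancel_right)
  have "pairwise orthogonal (f ` S)"
  proof (clarsimp simp: pairwise_def)
    fix l l' assume ll': "l \<in> S" "l' \<in> S" "f l \<noteq> f l'"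
    have "l * (f l \<bullet> f l') = f l \<bullet> (M *v f l')"
      using f[OF ll'(1)] symmetric_mat_inner[OF sym, of "f l" "f l'"] by simp
    also have "\<dots> = l' * (f l \<bullet> f l')" using f[OF ll'(2)] by simp
    finally show "orthogonal (f l) (f l')"
      using ll'(3) unfolding orthogonal_def by (metis mult_right_cancel)
  qed
  moreover have "0 \<notin> f ` S" using f by auto
  ultimately have "finite (f ` S)"
    using pairwise_orthogonal_independent independent_bound by blast
  then show ?thesis using finite_imageD inj S_def by blast
qed

lemma pos_def_eigenvalue_pos:
  assumes "pos_def M" "real_eigenvalue M l"
  shows "l > 0"
proof -
  obtain v where v: "v \<noteq> 0" "M *v v = l *s v"
    using assms(2) unfolding real_eigenvalue_def by blast
  have "0 < v \<bullet> (M *v v)" using assms(1) v(1) unfolding pos_def_def by blast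
  also have "\<dots> = l * (v \<bullet> v)" using v by (simp add: scalar_mult_eq_scaleR)
  finally show ?thesis using inner_ge_zero[of v] by (auto simp: zero_less_mult_iff)
qed

lemma pos_def_min_eigenvalue:
  assumes "pos_def M"
  obtains m where "m > 0" "real_eigenvalue M m" "\<And>x. m * (norm x)\<^sup>2 \<le> x \<bullet> (M *v x)"
proof -
  obtain u where u: "norm u = 1" "M *v u = (u \<bullet> (M *v u)) *s u"
    "\<And>x. (u \<bullet> (M *v u)) * (norm x)\<^sup>2 \<le> x \<bullet> (M *v x)"
    using assms symmetric_mat_min_eigenvector unfolding pos_def_def by blast
  have "real_eigenvalue M (u \<bullet> (M *v u))"
    unfolding real_eigenvalue_def using u by (metis norm_zero zero_neq_one)
  then show thesis using that u assms pos_def_eigenvalue_pos by blast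
qed

lemma sigma_min_pos_lower_bound:
  fixes Qf :: "real^'n^'m"
  assumes pd: "pos_def (transpose Qf ** Qf)"
  shows "sigma_min Qf > 0"
    and "(sigma_min Qf)\<^sup>2 * (norm x)\<^sup>2 \<le> x \<bullet> ((transpose Qf ** Qf) *v x)"
proof -
  define Q where "Q = transpose Qf ** Qf"
  define S where "S = {sqrt l | l. real_eigenvalue Q l \<and> l \<noteq> 0}"
  have sigma: "sigma_min Qf = Min S" unfolding sigma_min_def S_def Q_def ..
  obtain m where m: "m > 0" "real_eigenvalue Q m" "\<And>x. m * (norm x)\<^sup>2 \<le> x \<bullet> (Q *v x)"
    using pos_def_min_eigenvalue pd Q_def by blast
  have "finite {l. real_eigenvalue Q l \<and> l \<noteq> 0}"
    using pd unfolding Q_def pos_def_def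
    by (auto intro: finite_subset[OF _ finite_real_eigenvalues_symmetric])
  moreover have "S = sqrt ` {l. real_eigenvalue Q l \<and> l \<noteq> 0}" unfolding S_def by auto
  ultimately have "finite S" by simp
  moreover have "sqrt m \<in> S" unfolding S_def using m by auto
  ultimately have le: "Min S \<le> sqrt m" and "Min S \<in> S" by (auto intro: Min_in)
  then show pos: "sigma_min Qf > 0"
    unfolding sigma S_def using pos_def_eigenvalue_pos[OF pd] Q_def by auto
  have "(sigma_min Qf)\<^sup>2 \<le> m"
    using le pos m(1) unfolding sigma by (metis less_imp_le real_sqrt_le_iff real_sqrt_unique)
  then show "(sigma_min Qf)\<^sup>2 * (norm x)\<^sup>2 \<le> x \<bullet> ((transpose Qf ** Qf) *v x)"
    using m(3)[of x] unfolding Q_def by (meson mult_right_mono order_trans zero_le_power2)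
qed

lemma pos_def_congruence:
  fixes E P :: "real^'n^'n"
  assumes E: "invertible E" and P: "pos_def P"
  shows "pos_def (transpose E ** P ** E)"
  unfolding pos_def_def symmetric_mat_def
proof (intro conjI allI impI)
  show "transpose (transpose E ** P ** E) = transpose E ** P ** E"
    using P by (simp add: matrix_transpose_mul matrix_mul_assoc pos_def_def symmetric_mat_def)
  fix x :: "real^'n" assume "x \<noteq> 0"
  then have "(E *v x) \<bullet> (P *v (E *v x)) > 0"
    using P invertible_matrix_vector_eq_0[OF E] unfolding pos_def_def by blast
  then show "x \<bullet> ((transpose E ** P ** E) *v x) > 0"
    by (simp only: inner_transpose_mult_mult)
qed

section \<open>The Lyapunov function and the vector field\<close>

lemma lyap_v_eq: "lyap_v E P x = (E *v x) \<bullet> (P *v (E *v x))"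
  unfolding lyap_v_def by (rule inner_transpose_mult_mult)

lemma lyap_v_lower_bound:
  fixes E P :: "real^'n^'n"
  assumes "invertible E" and "pos_def P"
  obtains \<mu> where "\<mu> > 0" "\<And>x. \<mu> * (norm x)\<^sup>2 \<le> lyap_v E P x"
  using pos_def_min_eigenvalue[OF pos_def_congruence[OF assms]] unfolding lyap_v_def by metis

lemma lyap_v_upper_bound:
  fixes E P :: "real^'n^'n"
  obtains C where "C > 0" "\<And>x. lyap_v E P x \<le> C * (norm x)\<^sup>2"
proof
  show "spec_norm (transpose E ** P ** E) + 1 > 0" by (simp add: add_nonneg_pos)
  show "lyap_v E P x \<le> (spec_norm (transpose E ** P ** E) + 1) * (norm x)\<^sup>2" for x
    using quadratic_form_le_spec_norm[of x "transpose E ** P ** E"] zero_le_power2[of "norm x"]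
    unfolding lyap_v_def distrib_right by linarith
qed

lemma continuous_on_lyap_v: "continuous_on S (lyap_v E P)"
  unfolding lyap_v_def
  by (intro continuous_intros linear_continuous_on matrix_vector_mul_bounded_linear)

lemma lyap_v_has_real_derivative:
  fixes E A P :: "real^'n^'n" and H :: "real^('n\<times>'n)^'n"
  assumes "(\<phi> has_vector_derivative qrhs E A H (\<phi> t)) (at t within S)"
  shows "((\<lambda>t. lyap_v E P (\<phi> t)) has_real_derivative lyap_vdot E A H P (\<phi> t)) (at t within S)"
proof -
  define M where "M = transpose E ** P ** E"
  define d where "d = qrhs E A H (\<phi> t)"
  have d1: "(\<phi> has_derivative (\<lambda>h. h *\<^sub>R d)) (at t within S)"
    using assms by (simp add: has_vector_derivative_def d_def)
  have "((\<lambda>t. \<phi> t \<bullet> (M *v \<phi> t)) has_derivative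
      (\<lambda>h. \<phi> t \<bullet> (M *v (h *\<^sub>R d)) + (h *\<^sub>R d) \<bullet> (M *v \<phi> t))) (at t within S)"
    by (intro has_derivative_inner d1 bounded_linear.has_derivative[OF matrix_vector_mul_bounded_linear])
  moreover have "(\<lambda>h. \<phi> t \<bullet> (M *v (h *\<^sub>R d)) + (h *\<^sub>R d) \<bullet> (M *v \<phi> t))
      = (*) (lyap_vdot E A H P (\<phi> t))"
    unfolding lyap_vdot_def Let_def M_def d_def
    by (rule ext) (simp add: matrix_vector_mult_scaleR algebra_simps)
  ultimately show ?thesis unfolding has_field_derivative_def lyap_v_def M_def by simp
qed

lemma lyap_vdot_0 [simp]: "lyap_vdot E A H P 0 = 0"
  by (simp add: lyap_vdot_def)

lemma lyap_vdot_eq: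
  fixes E A P :: "real^'n^'n" and H :: "real^('n\<times>'n)^'n" and Q :: "real^'n^'n"
  assumes E: "invertible E" and sym: "symmetric_mat P"
    and lyap: "transpose A ** P ** E + transpose E ** P ** A + Q = 0"
  shows "lyap_vdot E A H P x = 2 * ((H *v kron x x) \<bullet> (P *v (E *v x))) - x \<bullet> (Q *v x)"
proof -
  have "x \<bullet> ((transpose A ** P ** E + transpose E ** P ** A + Q) *v x) = 0"
    using lyap by simp
  then have "2 * ((A *v x) \<bullet> (P *v (E *v x))) + x \<bullet> (Q *v x) = 0"
    using symmetric_mat_inner[OF sym, of "E *v x" "A *v x"]
    by (simp only: matrix_vector_mult_add_rdistrib inner_add_right inner_transpose_mult_mult)
      (simp add: inner_commute)
  moreover have "x \<bullet> ((transpose E ** P ** E) *v qrhs E A H x)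
      = qrhs E A H x \<bullet> ((transpose E ** P ** E) *v x)"
    using symmetric_mat_inner[OF sym, of "E *v x" "E *v qrhs E A H x"]
    by (simp only: inner_transpose_mult_mult) (simp add: inner_commute)
  ultimately show ?thesis
    unfolding lyap_vdot_def Let_def inner_transpose_mult_mult matrix_vector_mult_qrhs[OF E]
    by (simp add: inner_add_left)
qed

lemma lyap_vdot_le:
  fixes E A P :: "real^'n^'n" and H :: "real^('n\<times>'n)^'n" and Q :: "real^'n^'n"
  assumes E: "invertible E" and P: "pos_def P"
    and lyap: "transpose A ** P ** E + transpose E ** P ** A + Q = 0"
  shows "lyap_vdot E A H P x
    \<le> (norm x)\<^sup>2 * (2 * spec_norm H * sqrt (spec_norm P) * sqrt (lyap_v E P x)) - x \<bullet> (Q *v x)"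
proof -
  define h y where "h = H *v kron x x" and "y = E *v x"
  have "h \<bullet> (P *v y) \<le> sqrt ((h \<bullet> (P *v y))\<^sup>2)" by simp
  also have "\<dots> \<le> sqrt (h \<bullet> (P *v h)) * sqrt (y \<bullet> (P *v y))"
    using real_sqrt_le_mono[OF pos_def_Cauchy_Schwarz[OF P, of h y]] by (simp only: real_sqrt_mult)
  also have "\<dots> = sqrt (h \<bullet> (P *v h)) * sqrt (lyap_v E P x)"
    by (simp add: y_def lyap_v_eq)
  also have "\<dots> \<le> sqrt (spec_norm P) * norm h * sqrt (lyap_v E P x)"
  proof (rule mult_right_mono)
    have "sqrt (h \<bullet> (P *v h)) \<le> sqrt (spec_norm P * (norm h)\<^sup>2)"
      by (rule real_sqrt_le_mono[OF quadratic_form_le_spec_norm])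
    then show "sqrt (h \<bullet> (P *v h)) \<le> sqrt (spec_norm P) * norm h"
      by (simp only: real_sqrt_mult real_sqrt_abs abs_norm_cancel)
  qed (simp add: lyap_v_eq pos_def_quadratic_form_nonneg[OF P])
  also have "\<dots> \<le> sqrt (spec_norm P) * (spec_norm H * (norm x)\<^sup>2) * sqrt (lyap_v E P x)"
  proof (intro mult_right_mono mult_left_mono)
    show "norm h \<le> spec_norm H * (norm x)\<^sup>2"
      using norm_matrix_vector_le[of H "kron x x"] unfolding h_def norm_kron power2_eq_square .
  qed (simp_all add: lyap_v_eq pos_def_quadratic_form_nonneg[OF P])
  finally have "2 * (h \<bullet> (P *v y))
      \<le> (norm x)\<^sup>2 * (2 * spec_norm H * sqrt (spec_norm P) * sqrt (lyap_v E P x))"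
    by (simp add: ac_simps)
  moreover have "symmetric_mat P" using P unfolding pos_def_def by simp
  ultimately show ?thesis
    using lyap_vdot_eq[OF E _ lyap, of H x] unfolding h_def y_def by linarith
qed

lemma qrhs_lipschitz_on_cball:
  fixes E A :: "real^'n^'n" and H :: "real^('n\<times>'n)^'n"
  assumes R: "R \<ge> 0"
  shows "(spec_norm (matrix_inv E) * (spec_norm A + 2 * R * spec_norm H))-lipschitz_on
    (cball 0 R) (qrhs E A H)"
proof (rule lipschitz_onI)
  fix x y :: "real^'n" assume "x \<in> cball 0 R" "y \<in> cball 0 R"
  then have xy: "norm x \<le> R" "norm y \<le> R" by auto
  have "qrhs E A H x - qrhs E A H y
      = matrix_inv E *v (A *v (x - y) + (H *v kron (x - y) x + H *v kron y (x - y)))"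
    unfolding qrhs_def matrix_vector_right_distrib[symmetric] kron_diff_kron[symmetric]
    by (simp add: matrix_vector_mult_diff_distrib algebra_simps)
  moreover have "norm (H *v kron (x - y) x + H *v kron y (x - y)) \<le> 2 * R * spec_norm H * norm (x - y)"
  proof -
    have "norm (H *v kron (x - y) x + H *v kron y (x - y))
        \<le> spec_norm H * norm (kron (x - y) x) + spec_norm H * norm (kron y (x - y))"
      by (intro order_trans[OF norm_triangle_ineq] add_mono norm_matrix_vector_le)
    also have "\<dots> = spec_norm H * norm (x - y) * (norm x + norm y)"
      by (simp add: norm_kron algebra_simps)
    also have "\<dots> \<le> spec_norm H * norm (x - y) * (2 * R)"
      using xy spec_norm_nonneg[of H] by (intro mult_left_mono) auto
    finally show ?thesis by (simp add: ac_simps)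
  qed
  ultimately have "norm (qrhs E A H x - qrhs E A H y)
      \<le> spec_norm (matrix_inv E) * (spec_norm A * norm (x - y) + 2 * R * spec_norm H * norm (x - y))"
    using spec_norm_nonneg[of "matrix_inv E"]
    by (auto intro!: order_trans[OF norm_matrix_vector_le] mult_left_mono
        order_trans[OF norm_triangle_ineq] add_mono norm_matrix_vector_le)
  then show "dist (qrhs E A H x) (qrhs E A H y)
      \<le> spec_norm (matrix_inv E) * (spec_norm A + 2 * R * spec_norm H) * dist x y"
    by (simp add: dist_norm algebra_simps)
qed (use R in \<open>intro mult_nonneg_nonneg add_nonneg_nonneg spec_norm_nonneg; simp\<close>)

section \<open>Existence of solutions\<close>

lemma lipschitz_extension_closed_convex:
  fixes f :: "'a::euclidean_space \<Rightarrow> 'b::metric_space"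
  assumes "L-lipschitz_on S f" and "closed S" "convex S" "S \<noteq> {}"
  obtains g where "L-lipschitz_on UNIV g" and "\<And>x. x \<in> S \<Longrightarrow> g x = f x"
proof
  have "1-lipschitz_on UNIV (closest_point S)"
    using assms closest_point_lipschitz[of S] by (intro lipschitz_onI) auto
  moreover have "L-lipschitz_on (closest_point S ` UNIV) f"
    using assms by (intro lipschitz_on_subset[OF assms(1)] image_subsetI closest_point_in_set)
  ultimately show "L-lipschitz_on UNIV (\<lambda>x. f (closest_point S x))"
    using lipschitz_on_compose2 by fastforce
  show "f (closest_point S x) = f x" if "x \<in> S" for x
    using that by (simp add: closest_point_self)
qed

lemma exp_weighted_norm_integral_le:
  fixes f :: "real \<Rightarrow> 'a::banach"
  assumes k: "k > 0" and u: "u \<ge> 0" and a: "a \<ge> 0" and b: "b \<ge> 0"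
    and f: "f integrable_on {0..u}"
    and bound: "\<And>s. s \<in> {0..u} \<Longrightarrow> norm (f s) \<le> a + b * exp (k * s)"
  shows "exp (- k * u) * norm (integral {0..u} f) \<le> (a + b) / k"
proof -
  have "((\<lambda>s. a + b * exp (k * s)) has_integral
      (a * u + b * exp (k * u) / k) - (a * 0 + b * exp (k * 0) / k)) {0..u}"
    using k u by (intro fundamental_theorem_of_calculus)
      (auto intro!: derivative_eq_intros simp: has_real_derivative_iff_has_vector_derivative[symmetric])
  then have "norm (integral {0..u} f) \<le> a * u + b * (exp (k * u) - 1) / k"
    using integral_norm_bound_integral[OF f _ bound] by (simp add: integral_unique diff_divide_distrib
        has_integral_integrable algebra_simps)
  then have "exp (- k * u) * norm (integral {0..u} f)
      \<le> exp (- k * u) * (a * u + b * (exp (k * u) - 1) / k)"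
    by (rule mult_left_mono) simp
  also have "\<dots> = a * (u * exp (- k * u)) + b * (1 - exp (- k * u)) / k"
    using k by (simp add: exp_minus field_simps)
  also have "\<dots> \<le> a * (1 / k) + b * 1 / k"
  proof (intro add_mono mult_left_mono divide_right_mono)
    have "k * u \<le> exp (k * u)" using exp_ge_add_one_self[of "k * u"] by linarith
    then show "u * exp (- k * u) \<le> 1 / k"
      using k by (simp add: exp_minus field_simps)
  qed (use a b k in auto)
  finally show ?thesis by (simp add: add_divide_distrib)
qed

lemma continuous_on_integral_max_0:
  fixes f :: "real \<Rightarrow> 'a::banach"
  assumes "continuous_on UNIV f"
  shows "continuous_on UNIV (\<lambda>t. integral {0..max 0 t} f)"
proof -
  have "isCont (\<lambda>t. integral {0..max 0 t} f) t0" for t0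
  proof -
    define b where "b = \<bar>t0\<bar> + 1"
    have "continuous_on {0..b} (\<lambda>u. integral {0..u} f)"
      using assms by (intro indefinite_integral_continuous_1 integrable_continuous_real)
        (rule continuous_on_subset, auto)
    then have "continuous_on {-b<..<b} (\<lambda>t. integral {0..max 0 t} f)"
      by (rule continuous_on_compose2[where f="\<lambda>t. max 0 t"]) (auto intro!: continuous_intros)
    then show ?thesis by (rule continuous_on_interior) (auto simp: b_def interior_open abs_if)
  qed
  then show ?thesis by (simp add: continuous_at_imp_continuous_on)
qed

text \<open>The Picard operator of phi' = G phi, phi 0 = x0, written for y t = exp (- k t) phi t and
  extended to negative times by the constant x0.\<close>
definition weighted_picard :: "('a::banach \<Rightarrow> 'a) \<Rightarrow> real \<Rightarrow> 'a \<Rightarrow> (real \<Rightarrow>\<^sub>C 'a) \<Rightarrow> real \<Rightarrow> 'a"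
  where "weighted_picard G k x0 y t = exp (- k * max 0 t) *\<^sub>R
    (x0 + integral {0..max 0 t} (\<lambda>s. G (exp (k * s) *\<^sub>R apply_bcontfun y s)))"

lemma continuous_on_weighted_integrand:
  fixes G :: "'a::banach \<Rightarrow> 'a"
  assumes "continuous_on UNIV G"
  shows "continuous_on UNIV (\<lambda>s. G (exp (k * s) *\<^sub>R apply_bcontfun y s))"
  by (rule continuous_on_compose2[OF assms]) (auto intro!: continuous_intros)

lemma weighted_picard_bcontfun:
  fixes G :: "'a::banach \<Rightarrow> 'a"
  assumes lip: "L-lipschitz_on UNIV G" and k: "k > 0"
  shows "weighted_picard G k x0 y \<in> bcontfun"
proof (rule bcontfun_normI)
  have cont: "continuous_on UNIV (\<lambda>s. G (exp (k * s) *\<^sub>R apply_bcontfun y s))"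
    by (intro continuous_on_weighted_integrand lipschitz_on_continuous_on[OF lip])
  then show "continuous_on UNIV (weighted_picard G k x0 y)"
    unfolding weighted_picard_def by (intro continuous_intros continuous_on_integral_max_0)
  fix t
  define I where "I = integral {0..max 0 t} (\<lambda>s. G (exp (k * s) *\<^sub>R apply_bcontfun y s))"
  have "norm (G (exp (k * s) *\<^sub>R apply_bcontfun y s)) \<le> norm (G 0) + L * norm y * exp (k * s)" for s
  proof -
    have "norm (G (exp (k * s) *\<^sub>R apply_bcontfun y s))
        \<le> norm (G 0) + L * norm (exp (k * s) *\<^sub>R apply_bcontfun y s)"
      using norm_triangle_sub[of "G (exp (k * s) *\<^sub>R apply_bcontfun y s)" "G 0"]
        lipschitz_on_normD[OF lip, of "exp (k * s) *\<^sub>R apply_bcontfun y s" 0] by simp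
    also have "\<dots> \<le> norm (G 0) + L * norm y * exp (k * s)"
      using norm_bounded[of y s] lipschitz_on_nonneg[OF lip]
      by (simp add: mult_left_mono mult_right_mono ac_simps)
    finally show ?thesis .
  qed
  then have "exp (- k * max 0 t) * norm I \<le> (norm (G 0) + L * norm y) / k"
    unfolding I_def using k lipschitz_on_nonneg[OF lip]
    by (intro exp_weighted_norm_integral_le integrable_continuous_real continuous_on_subset[OF cont]) auto
  moreover have "exp (- k * max 0 t) * norm x0 \<le> norm x0"
    using k by (intro mult_left_le_one_le) auto
  moreover have "norm (weighted_picard G k x0 y t) \<le> exp (- k * max 0 t) * (norm x0 + norm I)"
    unfolding weighted_picard_def I_def by (simp add: mult_left_mono norm_triangle_ineq)
  ultimately show "norm (weighted_picard G k x0 y t) \<le> norm x0 + (norm (G 0) + L * norm y) / k"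
    unfolding distrib_left by linarith
qed

lemma dist_weighted_picard_le:
  fixes G :: "'a::banach \<Rightarrow> 'a"
  assumes lip: "L-lipschitz_on UNIV G" and k: "k > 0"
  shows "dist (weighted_picard G k x0 y t) (weighted_picard G k x0 z t) \<le> L / k * dist y z"
proof -
  define g where "g y s = G (exp (k * s) *\<^sub>R apply_bcontfun y s)" for y :: "real \<Rightarrow>\<^sub>C 'a" and s
  have int: "g y integrable_on {0..max 0 t}" for y
    unfolding g_def using continuous_on_weighted_integrand[OF lipschitz_on_continuous_on[OF lip]]
    by (intro integrable_continuous_real) (auto intro: continuous_on_subset)
  have "norm (g y s - g z s) \<le> 0 + L * dist y z * exp (k * s)" for s
  proof -
    have "norm (g y s - g z s) \<le> L * (exp (k * s) * dist (apply_bcontfun y s) (apply_bcontfun z s))"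
      using lipschitz_on_normD[OF lip, of "exp (k * s) *\<^sub>R apply_bcontfun y s"
          "exp (k * s) *\<^sub>R apply_bcontfun z s"]
      unfolding g_def dist_norm by (simp add: scaleR_diff_right[symmetric])
    also have "\<dots> \<le> L * (exp (k * s) * dist y z)"
      using lipschitz_on_nonneg[OF lip] by (intro mult_left_mono dist_bounded) auto
    finally show ?thesis by (simp add: ac_simps)
  qed
  then have "exp (- k * max 0 t) * norm (integral {0..max 0 t} (\<lambda>s. g y s - g z s))
      \<le> (0 + L * dist y z) / k"
    using k lipschitz_on_nonneg[OF lip] by (intro exp_weighted_norm_integral_le integrable_diff int) auto
  then show ?thesis
    unfolding weighted_picard_def dist_norm g_def[symmetric]
    by (simp add: integral_diff int scaleR_diff_right[symmetric])
qed

lemma lipschitz_integral_equation_solution: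
  fixes G :: "'a::banach \<Rightarrow> 'a"
  assumes lip: "L-lipschitz_on UNIV G"
  obtains \<phi> :: "real \<Rightarrow> 'a" where "continuous_on UNIV \<phi>"
    and "\<And>t. \<phi> t = x0 + integral {0..max 0 t} (\<lambda>s. G (\<phi> s))"
proof -
  define k where "k = 2 * L + 1"
  have L: "L \<ge> 0" using lip by (rule lipschitz_on_nonneg)
  then have k: "k > 0" "L / k < 1" unfolding k_def by simp_all
  let ?T = "\<lambda>y. Bcontfun (weighted_picard G k x0 y)"
  have T: "apply_bcontfun (?T y) = weighted_picard G k x0 y" for y
    using weighted_picard_bcontfun[OF lip k(1)] by (simp add: Bcontfun_inverse)
  have "dist (?T y) (?T z) \<le> L / k * dist y z" for y z
    using dist_weighted_picard_le[OF lip k(1)] by (intro dist_bound) (simp add: T)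
  then obtain y where fixpoint: "?T y = y"
    using banach_fix_type[of "L / k" ?T] L k by auto
  define \<phi> where "\<phi> t = exp (k * max 0 t) *\<^sub>R apply_bcontfun y t" for t
  show thesis
  proof (rule that[of \<phi>])
    show "continuous_on UNIV \<phi>" unfolding \<phi>_def by (intro continuous_intros) auto
    fix t
    have "apply_bcontfun y t = weighted_picard G k x0 y t" using T fixpoint by metis
    moreover have "integral {0..max 0 t} (\<lambda>s. G (exp (k * s) *\<^sub>R apply_bcontfun y s))
        = integral {0..max 0 t} (\<lambda>s. G (\<phi> s))"
      by (rule integral_cong) (auto simp: \<phi>_def)
    ultimately show "\<phi> t = x0 + integral {0..max 0 t} (\<lambda>s. G (\<phi> s))"
      unfolding \<phi>_def weighted_picard_def by (simp add: exp_minus_inverse)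
  qed
qed

lemma is_solution_if_integral_equation:
  fixes G :: "real^'n \<Rightarrow> real^'n"
  assumes contG: "continuous_on UNIV G" and cont: "continuous_on UNIV \<phi>"
    and eq: "\<And>t. \<phi> t = x0 + integral {0..max 0 t} (\<lambda>s. G (\<phi> s))"
  shows "is_solution G x0 \<phi>"
  unfolding is_solution_def
proof (intro conjI allI impI)
  show "\<phi> 0 = x0" using eq[of 0] by simp
  fix t :: real assume t: "t \<ge> 0"
  have "continuous_on UNIV (\<lambda>s. G (\<phi> s))"
    by (rule continuous_on_compose2[OF contG cont]) auto
  then have "((\<lambda>u. integral {0..u} (\<lambda>s. G (\<phi> s))) has_vector_derivative G (\<phi> t))
      (at t within {0..t + 1})"
    using t by (intro integral_has_vector_derivative[OF continuous_on_subset]) auto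
  then have "((\<lambda>u. x0 + integral {0..u} (\<lambda>s. G (\<phi> s))) has_vector_derivative G (\<phi> t))
      (at t within {0..t + 1})"
    using has_vector_derivative_add[OF has_vector_derivative_const] by fastforce
  also have "at t within {0..t + 1} = at t within {0..}"
    by (rule at_within_nhd[of t "{..<t + 1}"]) auto
  finally show "(\<phi> has_vector_derivative G (\<phi> t)) (at t within {0..})"
  proof (rule has_vector_derivative_transform_within[of _ _ _ _ 1])
    show "x0 + integral {0..s} (\<lambda>s. G (\<phi> s)) = \<phi> s" if "s \<in> {0..}" for s
      using eq[of s] that by simp
  qed (use t in auto)
qed

lemma is_solution_exists_if_lipschitz:
  fixes G :: "real^'n \<Rightarrow> real^'n"
  assumes "L-lipschitz_on UNIV G"
  obtains \<phi> where "is_solution G x0 \<phi>"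
  using lipschitz_integral_equation_solution[OF assms]
    is_solution_if_integral_equation[OF lipschitz_on_continuous_on[OF assms]] by metis

lemma is_solution_continuous_on: "is_solution G x0 \<phi> \<Longrightarrow> continuous_on {0..} \<phi>"
  unfolding is_solution_def
  by (auto simp: continuous_on_eq_continuous_within intro: has_vector_derivative_continuous)

section \<open>Comparison arguments for scalar functions\<close>

lemma has_real_derivative_at_within_nonneg:
  fixes t :: real
  assumes "t > 0" and "(f has_real_derivative d) (at t within {0..})"
  shows "(f has_real_derivative d) (at t)"
proof -
  have "at t within {0..} = at t"
    by (rule at_within_nhd[of t "{0<..}"]) (use assms in auto)
  then show ?thesis using assms by simp
qed

text \<open>Otherwise consider the first time after t1 at which g reaches a level m strictly between
  g t1 and K: up to that time g stays below K, so it cannot have increased.\<close>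
lemma deriv_nonpos_below_imp_le:
  fixes g :: "real \<Rightarrow> real"
  assumes cont: "continuous_on {0..} g"
    and deriv: "\<And>t. t > 0 \<Longrightarrow> g t < K \<Longrightarrow> \<exists>d. DERIV g t :> d \<and> d \<le> 0"
    and t1: "0 \<le> t1" "g t1 < K" and t: "t1 \<le> t"
  shows "g t \<le> g t1"
proof (rule ccontr)
  assume "\<not> g t \<le> g t1"
  define m where "m = min (g t) ((g t1 + K) / 2)"
  have m: "g t1 < m" "m < K" "m \<le> g t" using t1 \<open>\<not> g t \<le> g t1\<close> unfolding m_def by (auto simp: min_def)
  define Z where "Z = {t1..t} \<inter> g -` {m..}"
  have "closed Z"
    unfolding Z_def using cont t1 by (intro continuous_closed_preimage) (auto intro: continuous_on_subset)
  moreover have "t \<in> Z" "bdd_below Z" unfolding Z_def using t m by auto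
  ultimately have "Inf Z \<in> Z" using closed_contains_Inf by blast
  then have \<tau>: "t1 \<le> Inf Z" "Inf Z \<le> t" "m \<le> g (Inf Z)" unfolding Z_def by auto
  have below: "g s < m" if "t1 \<le> s" "s < Inf Z" for s
    using that \<tau> cInf_lower[OF _ \<open>bdd_below Z\<close>, of s] unfolding Z_def by force
  have "g (Inf Z) \<le> g t1"
  proof (rule DERIV_nonpos_imp_decreasing_open[OF \<tau>(1)])
    show "continuous_on {t1..Inf Z} g" using cont t1 by (auto intro: continuous_on_subset)
    fix s assume "t1 < s" "s < Inf Z"
    then show "\<exists>d. DERIV g s :> d \<and> d \<le> 0"
      using deriv[of s] below[of s] m t1 by auto
  qed
  then show False using \<tau>(3) m(1) by simp
qed

lemma trapped_below:
  fixes g :: "real \<Rightarrow> real"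
  assumes cont: "continuous_on {0..} g"
    and deriv: "\<And>t. t > 0 \<Longrightarrow> g t < K \<Longrightarrow> \<exists>d. DERIV g t :> d \<and> d \<le> 0"
    and g0: "g 0 \<le> K"
    and enter: "g 0 < K \<or> (\<exists>d < 0. (g has_real_derivative d) (at 0 within {0..}))"
  obtains t1 where "t1 \<ge> 0" "g t1 < K" "\<And>t. t1 \<le> t \<Longrightarrow> g t \<le> g t1" "\<And>t. 0 \<le> t \<Longrightarrow> g t \<le> K"
proof -
  obtain t1 where t1: "t1 \<ge> 0" "g t1 < K" and early: "\<And>t. 0 \<le> t \<Longrightarrow> t < t1 \<Longrightarrow> g t \<le> K"
  proof (cases "g 0 < K")
    case False
    then obtain d where "d < 0" "(g has_real_derivative d) (at 0 within {0..})" using enter by blast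
    from has_real_derivative_neg_dec_right[OF this(2,1)] obtain \<delta> where
      \<delta>: "\<delta> > 0" "\<And>h. 0 < h \<Longrightarrow> h < \<delta> \<Longrightarrow> g h < g 0" by auto
    show thesis
    proof (rule that[of "\<delta> / 2"])
      show "g (\<delta> / 2) < K" using \<delta>(2)[of "\<delta> / 2"] \<delta>(1) g0 by simp
      show "g t \<le> K" if "0 \<le> t" "t < \<delta> / 2" for t
        using that \<delta>(2)[of t] g0 by (cases "t = 0") auto
    qed (use \<delta> in auto)
  qed (use that[of 0] in auto)
  have late: "g t \<le> g t1" if "t1 \<le> t" for t
    using deriv_nonpos_below_imp_le[OF cont deriv t1 that] by blast
  show thesis
    using that[OF t1 late] early late t1 by (meson less_imp_le not_le order_trans)
qed

lemma le_exp_decay_if_deriv_le: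
  fixes g :: "real \<Rightarrow> real"
  assumes cont: "continuous_on {t1..} g"
    and deriv: "\<And>t. t > t1 \<Longrightarrow> \<exists>d. DERIV g t :> d \<and> d \<le> - \<gamma> * g t"
    and t: "t \<ge> t1"
  shows "g t \<le> g t1 * exp (- \<gamma> * (t - t1))"
proof -
  define h where "h s = g s * exp (\<gamma> * s)" for s
  have "h t \<le> h t1"
  proof (rule DERIV_nonpos_imp_decreasing_open[OF t])
    fix s assume s: "t1 < s" "s < t"
    then obtain d where d: "DERIV g s :> d" "d \<le> - \<gamma> * g s" using deriv by blast
    have "DERIV h s :> d * exp (\<gamma> * s) + g s * (exp (\<gamma> * s) * \<gamma>)"
      unfolding h_def using d(1) by (auto intro!: derivative_eq_intros)
    moreover have "d * exp (\<gamma> * s) + g s * (exp (\<gamma> * s) * \<gamma>) \<le> 0"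
      using mult_right_mono[OF d(2), of "exp (\<gamma> * s)"] by (simp add: algebra_simps)
    ultimately show "\<exists>y. DERIV h s :> y \<and> y \<le> 0" by blast
  next
    show "continuous_on {t1..t} h"
      unfolding h_def by (intro continuous_intros continuous_on_subset[OF cont]) auto
  qed
  then show ?thesis
    unfolding h_def by (simp add: field_simps exp_diff algebra_simps mult_exp_exp[symmetric])
qed

lemma tendsto_exp_decay_0:
  fixes \<gamma> :: real
  assumes "\<gamma> > 0"
  shows "((\<lambda>t. a * exp (- \<gamma> * (t - t1))) \<longlongrightarrow> 0) at_top"
proof -
  have "filterlim (\<lambda>t. - t1 + t) at_top at_top"
    by (rule filterlim_tendsto_add_at_top[OF tendsto_const filterlim_ident])
  then have "filterlim (\<lambda>t. - \<gamma> * (- t1 + t)) at_bot at_top"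
    using assms by (intro filterlim_cmult_at_bot_at_top) auto
  then have "((\<lambda>t. exp (- \<gamma> * (t - t1))) \<longlongrightarrow> 0) at_top"
    using filterlim_compose[OF exp_at_bot] by simp
  then show ?thesis by (rule tendsto_mult_right_zero)
qed

section \<open>Invariant sublevel sets\<close>

lemma lyap_v_trapped_in_sublevel:
  fixes E A P :: "real^'n^'n" and H :: "real^('n\<times>'n)^'n"
  assumes sol: "is_solution G x0 \<phi>"
    and agree: "\<And>x. lyap_v E P x \<le> K \<Longrightarrow> G x = qrhs E A H x"
    and nonpos: "\<And>x. lyap_v E P x < K \<Longrightarrow> lyap_vdot E A H P x \<le> 0"
    and x0: "lyap_v E P x0 \<le> K"
    and enter: "lyap_v E P x0 < K \<or> lyap_vdot E A H P x0 < 0"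
  obtains t1 where "t1 \<ge> 0" "lyap_v E P (\<phi> t1) < K"
    "\<And>t. t1 \<le> t \<Longrightarrow> lyap_v E P (\<phi> t) \<le> lyap_v E P (\<phi> t1)"
    "\<And>t. 0 \<le> t \<Longrightarrow> lyap_v E P (\<phi> t) \<le> K"
proof -
  have \<phi>0: "\<phi> 0 = x0" using sol unfolding is_solution_def by simp
  have deriv: "((\<lambda>t. lyap_v E P (\<phi> t)) has_real_derivative lyap_vdot E A H P (\<phi> t))
      (at t within {0..})" if "t \<ge> 0" "lyap_v E P (\<phi> t) \<le> K" for t
    using sol that agree[of "\<phi> t"] unfolding is_solution_def
    by (intro lyap_v_has_real_derivative) auto
  show thesis
  proof (rule trapped_below[of "\<lambda>t. lyap_v E P (\<phi> t)" K])
    show "continuous_on {0..} (\<lambda>t. lyap_v E P (\<phi> t))"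
      using continuous_on_compose2[OF continuous_on_lyap_v is_solution_continuous_on[OF sol]] by blast
    show "\<exists>d. DERIV (\<lambda>t. lyap_v E P (\<phi> t)) t :> d \<and> d \<le> 0"
      if "t > 0" "lyap_v E P (\<phi> t) < K" for t
      using that deriv[of t] nonpos[of "\<phi> t"] has_real_derivative_at_within_nonneg by force
    show "lyap_v E P (\<phi> 0) < K \<or>
        (\<exists>d<0. ((\<lambda>t. lyap_v E P (\<phi> t)) has_real_derivative d) (at 0 within {0..}))"
      using enter deriv[of 0] x0 \<phi>0 by auto
  qed (use that x0 \<phi>0 in auto)
qed

lemma solution_exists_in_sublevel:
  fixes E A P :: "real^'n^'n" and H :: "real^('n\<times>'n)^'n"
  assumes E: "invertible E" and P: "pos_def P"
    and nonpos: "\<And>x. lyap_v E P x < K \<Longrightarrow> lyap_vdot E A H P x \<le> 0"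
    and x0: "lyap_v E P x0 \<le> K"
    and enter: "lyap_v E P x0 < K \<or> lyap_vdot E A H P x0 < 0"
  obtains \<phi> where "is_solution (qrhs E A H) x0 \<phi>"
proof -
  obtain \<mu> where \<mu>: "\<mu> > 0" "\<And>x. \<mu> * (norm x)\<^sup>2 \<le> lyap_v E P x"
    using lyap_v_lower_bound[OF E P] by blast
  define R where "R = sqrt (K / \<mu>)"
  have "K \<ge> 0"
    using mult_nonneg_nonneg[OF less_imp_le[OF \<mu>(1)] zero_le_power2, of "norm x0"] \<mu>(2)[of x0] x0
    by linarith
  then have R: "R \<ge> 0" unfolding R_def using \<mu> by simp
  have sublevel: "x \<in> cball 0 R" if "lyap_v E P x \<le> K" for x
  proof -
    have "\<mu> * (norm x)\<^sup>2 \<le> K" using \<mu>(2)[of x] that by linarith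
    then have "(norm x)\<^sup>2 \<le> K / \<mu>" using \<mu>(1) by (simp add: field_simps)
    then show ?thesis unfolding R_def by (simp add: real_le_rsqrt)
  qed
  have "cball 0 R \<noteq> ({} :: (real^'n) set)" using R by simp
  then obtain G L where G: "L-lipschitz_on UNIV G" "\<And>x. x \<in> cball 0 R \<Longrightarrow> G x = qrhs E A H x"
    using lipschitz_extension_closed_convex[OF qrhs_lipschitz_on_cball[OF R] closed_cball convex_cball]
    by blast
  obtain \<psi> where \<psi>: "is_solution G x0 \<psi>" using is_solution_exists_if_lipschitz[OF G(1)] by blast
  obtain t1 where "\<And>t. 0 \<le> t \<Longrightarrow> lyap_v E P (\<psi> t) \<le> K"
    using lyap_v_trapped_in_sublevel[OF \<psi> _ nonpos x0 enter] G(2) sublevel by blast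
  then have "is_solution (qrhs E A H) x0 \<psi>"
    using \<psi> G(2) sublevel unfolding is_solution_def by (metis atLeast_iff)
  then show thesis by (rule that)
qed

locale quadratic_lyapunov_bound =
  fixes E A P :: "real^'n^'n" and H :: "real^('n\<times>'n)^'n" and \<alpha> \<sigma> :: real
  assumes invertible_E: "invertible E" and pos_def_P: "pos_def P"
    and \<alpha>_nonneg: "\<alpha> \<ge> 0" and \<sigma>_pos: "\<sigma> > 0"
    and lyap_vdot_bound: "\<And>x. lyap_vdot E A H P x \<le> (norm x)\<^sup>2 * (\<alpha> * sqrt (lyap_v E P x) - \<sigma>\<^sup>2)"
begin

lemma lyap_vdot_le_margin:
  assumes "\<alpha> * sqrt (lyap_v E P x) \<le> \<sigma>\<^sup>2 - \<beta>"
  shows "lyap_vdot E A H P x \<le> - \<beta> * (norm x)\<^sup>2"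
  using lyap_vdot_bound[of x] mult_left_mono[OF assms, of "(norm x)\<^sup>2"] by (simp add: algebra_simps)

lemma lyap_vdot_nonpos_sublevel:
  assumes "\<alpha> * sqrt c \<le> \<sigma>\<^sup>2" and "lyap_v E P x \<le> c"
  shows "lyap_vdot E A H P x \<le> 0"
proof -
  have "\<alpha> * sqrt (lyap_v E P x) \<le> \<alpha> * sqrt c"
    using assms(2) \<alpha>_nonneg by (simp add: mult_left_mono)
  then show ?thesis using lyap_vdot_le_margin[of x 0] assms(1) by simp
qed

lemma sublevel_solution:
  assumes c: "\<alpha> * sqrt c \<le> \<sigma>\<^sup>2" and x0: "lyap_v E P x0 < c"
  shows "\<exists>\<phi>. is_solution (qrhs E A H) x0 \<phi>"
    and "is_solution (qrhs E A H) x0 \<phi> \<Longrightarrow> 0 \<le> t \<Longrightarrow> lyap_v E P (\<phi> t) \<le> c"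
proof -
  have nonpos: "lyap_vdot E A H P x \<le> 0" if "lyap_v E P x < c" for x
    using lyap_vdot_nonpos_sublevel[OF c] that by simp
  show "\<exists>\<phi>. is_solution (qrhs E A H) x0 \<phi>"
    using solution_exists_in_sublevel[OF invertible_E pos_def_P nonpos] x0 by (metis less_imp_le)
  show "lyap_v E P (\<phi> t) \<le> c" if "is_solution (qrhs E A H) x0 \<phi>" "0 \<le> t"
    using lyap_v_trapped_in_sublevel[OF that(1) _ nonpos] x0 that(2) by (metis less_imp_le)
qed

lemma lyap_v_exp_decay:
  assumes sol: "is_solution (qrhs E A H) x0 \<phi>" and t1: "t1 \<ge> 0"
    and stay: "\<And>t. t1 \<le> t \<Longrightarrow> lyap_v E P (\<phi> t) \<le> c" and c: "\<alpha> * sqrt c < \<sigma>\<^sup>2"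
  obtains \<gamma> where "\<gamma> > 0" "\<And>t. t1 \<le> t \<Longrightarrow> lyap_v E P (\<phi> t) \<le> lyap_v E P (\<phi> t1) * exp (- \<gamma> * (t - t1))"
proof -
  obtain C where "C > 0" and C: "\<And>x. lyap_v E P x \<le> C * (norm x)\<^sup>2"
    using lyap_v_upper_bound by blast
  define \<gamma> where "\<gamma> = (\<sigma>\<^sup>2 - \<alpha> * sqrt c) / C"
  have \<gamma>: "\<gamma> > 0" and \<gamma>C: "\<gamma> * C = \<sigma>\<^sup>2 - \<alpha> * sqrt c"
    using c \<open>C > 0\<close> unfolding \<gamma>_def by simp_all
  define g where "g t = lyap_v E P (\<phi> t)" for t
  have "g t \<le> g t1 * exp (- \<gamma> * (t - t1))" if "t1 \<le> t" for t
  proof (rule le_exp_decay_if_deriv_le[OF _ _ that])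
    show "continuous_on {t1..} g" unfolding g_def
      using continuous_on_compose2[OF continuous_on_lyap_v[of UNIV] is_solution_continuous_on[OF sol]] t1
      by (auto intro: continuous_on_subset)
    fix s assume s: "s > t1"
    have "\<alpha> * sqrt (g s) \<le> \<alpha> * sqrt c"
      using stay[of s] s \<alpha>_nonneg unfolding g_def by (simp add: mult_left_mono)
    then have "lyap_vdot E A H P (\<phi> s) \<le> - (\<gamma> * C) * (norm (\<phi> s))\<^sup>2"
      unfolding g_def \<gamma>C by (intro lyap_vdot_le_margin) linarith
    also have "\<dots> \<le> - \<gamma> * g s"
      using mult_left_mono[OF C[of "\<phi> s"] less_imp_le[OF \<gamma>]] unfolding g_def
      by (simp add: algebra_simps)
    finally have "lyap_vdot E A H P (\<phi> s) \<le> - \<gamma> * g s" .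
    moreover have "DERIV g s :> lyap_vdot E A H P (\<phi> s)"
      using sol s t1 unfolding g_def is_solution_def
      by (intro has_real_derivative_at_within_nonneg lyap_v_has_real_derivative) auto
    ultimately show "\<exists>d. DERIV g s :> d \<and> d \<le> - \<gamma> * g s" by blast
  qed
  with \<gamma> show thesis using that unfolding g_def by blast
qed

lemma solution_tendsto_0:
  assumes sol: "is_solution (qrhs E A H) x0 \<phi>" and t1: "t1 \<ge> 0"
    and stay: "\<And>t. t1 \<le> t \<Longrightarrow> lyap_v E P (\<phi> t) \<le> c" and c: "\<alpha> * sqrt c < \<sigma>\<^sup>2"
  shows "(\<phi> \<longlongrightarrow> 0) at_top"
proof -
  obtain \<mu> where \<mu>: "\<mu> > 0" "\<And>x. \<mu> * (norm x)\<^sup>2 \<le> lyap_v E P x"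
    using lyap_v_lower_bound[OF invertible_E pos_def_P] by blast
  obtain \<gamma> where \<gamma>: "\<gamma> > 0"
    and decay: "\<And>t. t1 \<le> t \<Longrightarrow> lyap_v E P (\<phi> t) \<le> lyap_v E P (\<phi> t1) * exp (- \<gamma> * (t - t1))"
    using lyap_v_exp_decay[OF sol t1 stay c] by blast
  define a where "a = lyap_v E P (\<phi> t1) / \<mu>"
  have "\<forall>\<^sub>F t in at_top. norm (\<phi> t) \<le> sqrt (a * exp (- \<gamma> * (t - t1)))"
    using eventually_ge_at_top[of t1]
  proof eventually_elim
    case (elim t)
    have "\<mu> * (norm (\<phi> t))\<^sup>2 \<le> lyap_v E P (\<phi> t1) * exp (- \<gamma> * (t - t1))"
      using \<mu>(2)[of "\<phi> t"] decay[OF elim] by linarith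
    then show ?case using \<mu>(1) unfolding a_def by (intro real_le_rsqrt) (simp add: field_simps)
  qed
  moreover have "((\<lambda>t. sqrt (a * exp (- \<gamma> * (t - t1)))) \<longlongrightarrow> 0) at_top"
    using tendsto_real_sqrt[OF tendsto_exp_decay_0[OF \<gamma>]] by simp
  ultimately show ?thesis by (rule Lim_null_comparison)
qed

lemma stable_equilibrium: "stable_equilibrium_0 (qrhs E A H)"
  unfolding stable_equilibrium_0_def
proof (intro conjI allI impI)
  show "qrhs E A H 0 = 0" by simp
  fix \<epsilon> :: real assume \<epsilon>: "\<epsilon> > 0"
  obtain \<mu> where \<mu>: "\<mu> > 0" "\<And>x. \<mu> * (norm x)\<^sup>2 \<le> lyap_v E P x"
    using lyap_v_lower_bound[OF invertible_E pos_def_P] by blast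
  obtain C where C: "C > 0" "\<And>x. lyap_v E P x \<le> C * (norm x)\<^sup>2"
    using lyap_v_upper_bound by blast
  text \<open>Below the level c, v cannot increase, and the sublevel set lies inside the epsilon-ball.\<close>
  define c where "c = min (\<mu> * \<epsilon>\<^sup>2 / 2) ((\<sigma>\<^sup>2 / (\<alpha> + 1))\<^sup>2)"
  have "c \<le> \<mu> * \<epsilon>\<^sup>2 / 2" "\<mu> * \<epsilon>\<^sup>2 > 0" unfolding c_def using \<mu> \<epsilon> by auto
  then have c: "c > 0" "c < \<mu> * \<epsilon>\<^sup>2" unfolding c_def using \<sigma>_pos \<alpha>_nonneg by auto
  have "\<alpha> * sqrt c \<le> \<alpha> * (\<sigma>\<^sup>2 / (\<alpha> + 1))"
    using \<alpha>_nonneg unfolding c_def by (intro mult_left_mono) (simp_all add: real_le_lsqrt)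
  also have "\<dots> \<le> \<sigma>\<^sup>2"
    using \<alpha>_nonneg by (simp add: field_simps)
  finally have level: "\<alpha> * sqrt c \<le> \<sigma>\<^sup>2" .
  show "\<exists>\<delta>>0. \<forall>x0. norm x0 < \<delta> \<longrightarrow> (\<exists>\<phi>. is_solution (qrhs E A H) x0 \<phi>) \<and>
      (\<forall>\<phi>. is_solution (qrhs E A H) x0 \<phi> \<longrightarrow> (\<forall>t\<ge>0. norm (\<phi> t) < \<epsilon>))"
  proof (rule exI[of _ "sqrt (c / C)"], intro conjI allI impI)
    show "sqrt (c / C) > 0" using c C(1) by simp
    fix x0 :: "real^'n" assume "norm x0 < sqrt (c / C)"
    then have "(norm x0)\<^sup>2 < (sqrt (c / C))\<^sup>2" by (intro power_strict_mono) auto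
    then have "C * (norm x0)\<^sup>2 < c" using C(1) c by (simp add: field_simps)
    then have x0: "lyap_v E P x0 < c" using C(2)[of x0] by linarith
    show "\<exists>\<phi>. is_solution (qrhs E A H) x0 \<phi>" by (rule sublevel_solution(1)[OF level x0])
    fix \<phi> and t :: real assume "is_solution (qrhs E A H) x0 \<phi>" and "t \<ge> 0"
    then have "\<mu> * (norm (\<phi> t))\<^sup>2 < \<mu> * \<epsilon>\<^sup>2"
      using sublevel_solution(2)[OF level x0] \<mu>(2)[of "\<phi> t"] c(2) by fastforce
    then show "norm (\<phi> t) < \<epsilon>" using \<mu>(1) \<epsilon> by (simp add: power_less_imp_less_base)
  qed
qed

lemma D_set_subset_domain_of_attraction:
  "D_set E A H P (\<sigma>\<^sup>2 / \<alpha>) \<subseteq> domain_of_attraction (qrhs E A H)"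
proof
  fix x0 assume "x0 \<in> D_set E A H P (\<sigma>\<^sup>2 / \<alpha>)"
  then have x0: "lyap_v E P x0 \<le> (\<sigma>\<^sup>2 / \<alpha>)\<^sup>2" "lyap_vdot E A H P x0 < 0"
    unfolding D_set_def by auto
  obtain \<mu> where \<mu>: "\<mu> > 0" "\<And>x. \<mu> * (norm x)\<^sup>2 \<le> lyap_v E P x"
    using lyap_v_lower_bound[OF invertible_E pos_def_P] by blast
  text \<open>For alpha = 0 the radius is sigma^2 / 0 = 0 and the set D is empty.\<close>
  have "x0 \<noteq> 0" using x0(2) by auto
  have "\<alpha> \<noteq> 0"
  proof
    assume "\<alpha> = 0"
    then have "\<mu> * (norm x0)\<^sup>2 \<le> 0" using x0(1) \<mu>(2)[of x0] by simp
    then show False using \<mu>(1) \<open>x0 \<noteq> 0\<close> by (simp add: mult_le_0_iff)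
  qed
  then have \<alpha>: "\<alpha> > 0" using \<alpha>_nonneg by simp
  define \<rho> where "\<rho> = \<sigma>\<^sup>2 / \<alpha>"
  have \<rho>: "\<rho> > 0" "\<alpha> * \<rho> = \<sigma>\<^sup>2" unfolding \<rho>_def using \<alpha> \<sigma>_pos by simp_all
  have below: "\<alpha> * sqrt v < \<sigma>\<^sup>2" if "v < \<rho>\<^sup>2" for v
    using mult_strict_left_mono[OF real_sqrt_less_mono[OF that] \<alpha>] \<rho> by simp
  have nonpos: "lyap_vdot E A H P x \<le> 0" if "lyap_v E P x < \<rho>\<^sup>2" for x
    using lyap_vdot_nonpos_sublevel[of "\<rho>\<^sup>2" x] \<rho> that by simp
  have "\<exists>\<phi>. is_solution (qrhs E A H) x0 \<phi>"
    using solution_exists_in_sublevel[OF invertible_E pos_def_P nonpos] x0 unfolding \<rho>_def by metis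
  moreover have "(\<phi> \<longlongrightarrow> 0) at_top" if sol: "is_solution (qrhs E A H) x0 \<phi>" for \<phi>
  proof -
    obtain t1 where "t1 \<ge> 0" "lyap_v E P (\<phi> t1) < \<rho>\<^sup>2"
      "\<And>t. t1 \<le> t \<Longrightarrow> lyap_v E P (\<phi> t) \<le> lyap_v E P (\<phi> t1)"
      using lyap_v_trapped_in_sublevel[OF sol _ nonpos] x0 unfolding \<rho>_def by metis
    then show ?thesis using solution_tendsto_0[OF sol] below by blast
  qed
  ultimately show "x0 \<in> domain_of_attraction (qrhs E A H)"
    unfolding domain_of_attraction_def by blast
qed

end

theorem proposition3p1:
  fixes E A P :: "real^'n^'n" and H :: "real^('n\<times>'n)^'n" and Qf :: "real^'n^'m"
  assumes "invertible E"
    and "\<And>x1 x2. H *v kron x1 x2 = H *v kron x2 x1"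
    and "hurwitz A"
    and "pos_def P"
    and "pos_def (transpose Qf ** Qf)"
    and "transpose A ** P ** E + transpose E ** P ** A + transpose Qf ** Qf = 0"
  shows "stable_equilibrium_0 (qrhs E A H)
     \<and> D_set E A H P ((sigma_min Qf)\<^sup>2 / (2 * spec_norm H * sqrt (spec_norm P)))
         \<subseteq> domain_of_attraction (qrhs E A H)"
proof -
  interpret quadratic_lyapunov_bound E A P H "2 * spec_norm H * sqrt (spec_norm P)" "sigma_min Qf"
  proof
    show "invertible E" "pos_def P" by fact+
    show "0 \<le> 2 * spec_norm H * sqrt (spec_norm P)" by simp
    show "sigma_min Qf > 0" using assms(5) by (rule sigma_min_pos_lower_bound)
    fix x
    show "lyap_vdot E A H P x \<le> (norm x)\<^sup>2 *
        (2 * spec_norm H * sqrt (spec_norm P) * sqrt (lyap_v E P x) - (sigma_min Qf)\<^sup>2)"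
      using lyap_vdot_le[OF assms(1,4,6), of H x] sigma_min_pos_lower_bound(2)[OF assms(5), of x]
      by (simp add: algebra_simps)
  qed
  show ?thesis using stable_equilibrium D_set_subset_domain_of_attraction by blast
qed

end
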